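(* Let $n\ge2$. For every $\Gamma\cup\{\varphi\}\subseteq{\bf F}(\Sigma,\mathcal{V})$: $\Gamma\vdash_{C_n}\varphi$ iff $\Gamma\vDash^{\mathsf{RN}}_{\mathcal{RM}_{C_n}}\varphi$.
   Context: $\Sigma$ has unary $\neg$ and binary $\wedge,\vee,\to$; ${\bf F}(\Sigma,\mathcal{V})$ its formulas over a denumerable set $\mathcal{V}$. $\alpha^0=\alpha$, $\alpha^{k+1}=\neg(\alpha^k\wedge\neg\alpha^k)$; $\alpha^{(1)}=\alpha^1$, $\alpha^{(k+1)}=\alpha^{(k)}\wedge\alpha^{k+1}$. $C_n$ is the Hilbert calculus with Modus Ponens and axiom schemata: $\alpha\to(\beta\to\alpha)$; $(\alpha\to(\beta\to\gamma))\to((\alpha\to\beta)\to(\alpha\to\gamma))$; $\alpha\to(\beta\to(\alpha\wedge\beta))$; $(\alpha\wedge\beta)\to\alpha$; $(\alpha\wedge\beta)\to\beta$; $\alpha\to(\alpha\vee\beta)$; $\beta\to(\alpha\vee\beta)$; $(\alpha\to\gamma)\to((\beta\to\gamma)\to((\alpha\vee\beta)\to\gamma))$; $\alpha\vee\neg\alpha$; $\neg\neg\alpha\to\alpha$; $\alpha^{(n)}\to(\alpha\to(\neg\alpha\to\beta))$; $(\alpha^{(n)}\wedge\beta^{(n)})\to((\alpha\wedge\beta)^{(n)}\wedge(\alpha\vee\beta)^{(n)}\wedge(\alpha\to\beta)^{(n)})$. $B_n=\{z\in\{0,1\}^{n+1}:(z_1\wedge\dots\wedge z_k)\vee z_{k+1}=1\text{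 for all }1\le k\le n\}$, with elements $T_n=(1,0,1,\dots,1)$, $t^n_i$ ($0\le i\le n-2$) having $z_1=z_2=1$ and a single $0$ at coordinate $i+3$, $t^n_{n-1}=(1,\dots,1)$, $F_n=(0,1,\dots,1)$. $D_n=\{z:z_1=1\}$, $Boo_n=\{T_n,F_n\}$, $I_n=B_n\setminus Boo_n$. $\mathcal{A}_{C_n}$ on $B_n$: $\tilde\neg z=\{w\in B_n:w_1=z_2,\ w_2\le z_1\}$; for $\#\in\{\wedge,\vee,\to\}$, $z\tilde\#w=\{u\in Boo_n:u_1=z_1\#w_1\}$ if $z,w\in Boo_n$, else $\{u\in B_n:u_1=z_1\#w_1\}$. A valuation is $\nu$ with $\nu(\neg\alpha)\in\tilde\neg\nu(\alpha)$, $\nu(\alpha\#\beta)\in\nu(\alpha)\tilde\#\nu(\beta)$. $\mathcal{F}_{C_n}$: valuations with $\nu(\alpha)=t^n_0\Rightarrow\nu(\alpha\wedge\neg\alpha)=T_n$, and for $1\le k\le n-1$, $\nu(\alpha)=t^n_k\Rightarrow(\nu(\alpha\wedge\neg\alpha)\in I_n$ and $\nu(\alpha^1)=t^n_{k-1})$. $\mathcal{RM}_{C_n}=(\mathcal{A}_{C_n},D_n,\mathcal{F}_{C_n})$; $\Gamma\vDash^{\mathsf{RN}}_{\mathcal{RM}_{C_n}}\varphi$ iff every $\nu\in\mathcal{F}_{C_n}$ with $\nu[\Gamma]\subseteq D_n$ has $\nu(\varphi)\in D_n$. *)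

theory Defs
  imports Main
begin

datatype fm = Var nat | Neg fm | Conj fm fm | Disj fm fm | Imp fm fm

fun cpow :: "fm \<Rightarrow> nat \<Rightarrow> fm" where
  "cpow a 0 = a"
| "cpow a (Suc k) = Neg (Conj (cpow a k) (Neg (cpow a k)))"

text \<open>alpha^(k), meaningful for k \<ge> 1\<close>
fun cwb :: "fm \<Rightarrow> nat \<Rightarrow> fm" where
  "cwb a 0 = cpow a 1"
| "cwb a (Suc 0) = cpow a 1"
| "cwb a (Suc (Suc k)) = Conj (cwb a (Suc k)) (cpow a (Suc (Suc k)))"

inductive Cax :: "nat \<Rightarrow> fm \<Rightarrow> bool" for n :: nat where
  A1: "Cax n (Imp a (Imp b a))"
| A2: "Cax n (Imp (Imp a (Imp b c)) (Imp (Imp a b) (Imp a c)))"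
| A3: "Cax n (Imp a (Imp b (Conj a b)))"
| A4: "Cax n (Imp (Conj a b) a)"
| A5: "Cax n (Imp (Conj a b) b)"
| A6: "Cax n (Imp a (Disj a b))"
| A7: "Cax n (Imp b (Disj a b))"
| A8: "Cax n (Imp (Imp a c) (Imp (Imp b c) (Imp (Disj a b) c)))"
| A9: "Cax n (Disj a (Neg a))"
| A10: "Cax n (Imp (Neg (Neg a)) a)"
| A11: "Cax n (Imp (cwb a n) (Imp a (Imp (Neg a) b)))"
| A12: "Cax n (Imp (Conj (cwb a n) (cwb b n))
            (Conj (cwb (Conj a b) n) (Conj (cwb (Disj a b) n) (cwb (Imp a b) n))))"

inductive Cder :: "nat \<Rightarrow> fm set \<Rightarrow> fm \<Rightarrow> bool" for n :: nat and \<Gamma> :: "fm set" where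
  prem: "a \<in> \<Gamma> \<Longrightarrow> Cder n \<Gamma> a"
| ax: "Cax n a \<Longrightarrow> Cder n \<Gamma> a"
| mp: "Cder n \<Gamma> a \<Longrightarrow> Cder n \<Gamma> (Imp a b) \<Longrightarrow> Cder n \<Gamma> b"

text \<open>Truth values: z \<in> {0,1}^(n+1) as bool lists of length n+1;
  coordinate z_j is z ! (j - 1).\<close>
definition Bn :: "nat \<Rightarrow> bool list set" where
  "Bn n = {z. length z = Suc n \<and>
     (\<forall>k. 1 \<le> k \<and> k \<le> n \<longrightarrow> (\<forall>i<k. z ! i) \<or> z ! k)}"

definition Tn :: "nat \<Rightarrow> bool list" where
  "Tn n = True # False # replicate (n - 1) True"

definition Fn :: "nat \<Rightarrow> bool list" where
  "Fn n = False # replicate n True"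

text \<open>t^n_i: for i \<le> n-2 all ones except a 0 at coordinate i+3; t^n_(n-1) all ones\<close>
definition tn :: "nat \<Rightarrow> nat \<Rightarrow> bool list" where
  "tn n i = (if i = n - 1 then replicate (Suc n) True
             else (replicate (Suc n) True)[Suc (Suc i) := False])"

definition Dn :: "nat \<Rightarrow> bool list set" where
  "Dn n = {z \<in> Bn n. z ! 0}"

definition Boo :: "nat \<Rightarrow> bool list set" where
  "Boo n = {Tn n, Fn n}"

definition In :: "nat \<Rightarrow> bool list set" where
  "In n = Bn n - Boo n"

definition negM :: "nat \<Rightarrow> bool list \<Rightarrow> bool list set" where
  "negM n z = {w \<in> Bn n. w ! 0 = z ! 1 \<and> (w ! 1 \<longrightarrow> z ! 0)}"

definition binM :: "nat \<Rightarrow> (bool \<Rightarrow> bool \<Rightarrow> bool) \<Rightarrow> bool list \<Rightarrow> bool list \<Rightarrow> bool list set" where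
  "binM n f z w = (if z \<in> Boo n \<and> w \<in> Boo n
                    then {u \<in> Boo n. u ! 0 = f (z ! 0) (w ! 0)}
                    else {u \<in> Bn n. u ! 0 = f (z ! 0) (w ! 0)})"

definition valuation :: "nat \<Rightarrow> (fm \<Rightarrow> bool list) \<Rightarrow> bool" where
  "valuation n v \<longleftrightarrow> (\<forall>a. v a \<in> Bn n) \<and>
     (\<forall>a. v (Neg a) \<in> negM n (v a)) \<and>
     (\<forall>a b. v (Conj a b) \<in> binM n (\<and>) (v a) (v b)) \<and>
     (\<forall>a b. v (Disj a b) \<in> binM n (\<or>) (v a) (v b)) \<and>
     (\<forall>a b. v (Imp a b) \<in> binM n (\<longrightarrow>) (v a) (v b))"

definition FC :: "nat \<Rightarrow> (fm \<Rightarrow> bool list) set" where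
  "FC n = {v. valuation n v \<and>
     (\<forall>a. v a = tn n 0 \<longrightarrow> v (Conj a (Neg a)) = Tn n) \<and>
     (\<forall>a k. 1 \<le> k \<and> k \<le> n - 1 \<and> v a = tn n k \<longrightarrow>
        v (Conj a (Neg a)) \<in> In n \<and> v (cpow a 1) = tn n (k - 1))}"

definition RNcons :: "nat \<Rightarrow> fm set \<Rightarrow> fm \<Rightarrow> bool" where
  "RNcons n \<Gamma> \<phi> \<longleftrightarrow> (\<forall>v \<in> FC n. (\<forall>g \<in> \<Gamma>. v g \<in> Dn n) \<longrightarrow> v \<phi> \<in> Dn n)"

end

theory Submission
  imports Defs
begin

text \<open>Soundness: for a valuation in \<open>FC\<close>, the formula \<open>a\<^sup>(\<^sup>n\<^sup>)\<close> is designated exactly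
  when \<open>v a\<close> is Boolean. Boolean values propagate to \<open>T\<^sub>n\<close> along the iterates \<open>a\<^sup>k\<close>,
  while the restrictions of \<open>FC\<close> make a value \<open>t\<^sub>i\<close> descend along the iterates until
  \<open>a\<^sup>i\<^sup>+\<^sup>1\<close> is undesignated. This validates the axioms on \<open>a\<^sup>(\<^sup>n\<^sup>)\<close>; the rest is routine.

  Completeness: a set not deriving \<open>\<phi>\<close> extends (Zorn) to a \<open>\<phi>\<close>-saturated set \<open>M\<close>. The
  canonical valuation reads the value of \<open>a\<close> off the membership of \<open>a\<close>, \<open>\<not>a\<close>,
  \<open>a\<^sup>1\<close>, \<dots>, \<open>a\<^sup>n\<^sup>-\<^sup>1\<close> in \<open>M\<close>. It lies in \<open>FC\<close> because at most one iterate of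
  \<open>a\<close> can be missing from \<open>M\<close>: if \<open>a\<^sup>k \<notin> M\<close>, then \<open>a\<^sup>k\<close> and its negation are not
  both in \<open>M\<close>, and such a formula has all its iterates in \<open>M\<close>.\<close>

lemma Cder_mono: "Cder n \<Gamma> a \<Longrightarrow> \<Gamma> \<subseteq> \<Delta> \<Longrightarrow> Cder n \<Delta> a"
  by (induction rule: Cder.induct) (auto intro: Cder.intros)

lemma Cder_imp_refl: "Cder n \<Gamma> (Imp a a)"
proof -
  have "Cder n \<Gamma> (Imp (Imp a (Imp (Imp a a) a)) (Imp (Imp a (Imp a a)) (Imp a a)))"
    by (intro Cder.ax Cax.A2)
  then show ?thesis
    by (meson Cax.A1 Cder.ax Cder.mp)
qed

lemma Cder_deduction: "Cder n (insert a \<Gamma>) b \<Longrightarrow> Cder n \<Gamma> (Imp a b)"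
proof (induction rule: Cder.induct)
  case (prem c)
  show ?case
  proof (cases "c = a")
    case True
    then show ?thesis by (simp add: Cder_imp_refl)
  next
    case False
    have "Cder n \<Gamma> (Imp c (Imp a c))" by (intro Cder.ax Cax.A1)
    then show ?thesis using prem False by (auto intro: Cder.prem Cder.mp)
  qed
next
  case (ax c)
  have "Cder n \<Gamma> (Imp c (Imp a c))" by (intro Cder.ax Cax.A1)
  then show ?case using ax by (auto intro: Cder.ax Cder.mp)
next
  case (mp c d)
  have "Cder n \<Gamma> (Imp (Imp a (Imp c d)) (Imp (Imp a c) (Imp a d)))" by (intro Cder.ax Cax.A2)
  then show ?case using mp.IH by (blast intro: Cder.mp)
qed

lemma Cder_cut: "Cder n \<Gamma> a \<Longrightarrow> Cder n (insert a \<Gamma>) b \<Longrightarrow> Cder n \<Gamma> b"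
  by (blast intro: Cder.mp Cder_deduction)

lemma Cder_finite_premises:
  "Cder n \<Gamma> a \<Longrightarrow> \<exists>\<Gamma>0. finite \<Gamma>0 \<and> \<Gamma>0 \<subseteq> \<Gamma> \<and> Cder n \<Gamma>0 a"
proof (induction rule: Cder.induct)
  case (prem a)
  then show ?case by (intro exI[of _ "{a}"]) (auto intro: Cder.prem)
next
  case (ax a)
  then show ?case by (intro exI[of _ "{}"]) (auto intro: Cder.ax)
next
  case (mp a b)
  then obtain G1 G2 where "finite G1" "G1 \<subseteq> \<Gamma>" "Cder n G1 a"
    and "finite G2" "G2 \<subseteq> \<Gamma>" "Cder n G2 (Imp a b)"
    by blast
  then have "Cder n (G1 \<union> G2) b"
    using Cder_mono[of n G1 a "G1 \<union> G2"] Cder_mono[of n G2 "Imp a b" "G1 \<union> G2"]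
    by (blast intro: Cder.mp)
  then show ?case
    using \<open>finite G1\<close> \<open>finite G2\<close> \<open>G1 \<subseteq> \<Gamma>\<close> \<open>G2 \<subseteq> \<Gamma>\<close>
    by (intro exI[of _ "G1 \<union> G2"]) simp
qed

locale saturated =
  fixes n :: nat and M :: "fm set" and \<phi> :: fm
  assumes not_derives: "\<not> Cder n M \<phi>"
    and derives_insert: "a \<notin> M \<Longrightarrow> Cder n (insert a M) \<phi>"

lemma saturated_extension:
  assumes "\<not> Cder n \<Gamma> \<phi>"
  shows "\<exists>M. \<Gamma> \<subseteq> M \<and> saturated n M \<phi>"
proof -
  let ?A = "{D. \<Gamma> \<subseteq> D \<and> \<not> Cder n D \<phi>}"
  have "\<Union>C \<in> ?A" if C: "C \<in> chains ?A" "C \<noteq> {}" for C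
  proof -
    have members: "X \<in> ?A" if "X \<in> C" for X
      using chainsD2[OF C(1)] that by blast
    have "\<not> Cder n (\<Union>C) \<phi>"
    proof
      assume "Cder n (\<Union>C) \<phi>"
      from Cder_finite_premises[OF this]
      obtain G where G: "finite G" "G \<subseteq> \<Union>C" "Cder n G \<phi>" by blast
      have "subset.chain ?A C" using C(1) by (simp add: chains_alt_def)
      then obtain B where "B \<in> C" "G \<subseteq> B"
        using finite_subset_Union_chain[OF G(1,2) C(2)] by blast
      then show False using G(3) members Cder_mono by blast
    qed
    moreover have "\<Gamma> \<subseteq> \<Union>C" using C(2) members by blast
    ultimately show ?thesis by simp
  qed
  moreover have "\<Gamma> \<in> ?A" using assms by simp
  ultimately have "\<forall>C\<in>chains ?A. \<exists>U\<in>?A. \<forall>X\<in>C. X \<subseteq> U"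
    by (metis Union_upper empty_iff)
  from Zorn_Lemma2[OF this]
  obtain M where M: "M \<in> ?A" and max: "\<forall>X\<in>?A. M \<subseteq> X \<longrightarrow> X = M" by blast
  have "Cder n (insert a M) \<phi>" if "a \<notin> M" for a
    using M max[rule_format, of "insert a M"] that by blast
  then show ?thesis using M by (auto intro: saturated.intro)
qed

lemma cpow_cpow: "cpow (cpow a j) k = cpow a (j + k)"
  by (induction k) auto

lemma cwb_iff_cpow:
  assumes conj: "\<And>x y. P (Conj x y) \<longleftrightarrow> P x \<and> P y" and "1 \<le> n"
  shows "P (cwb a n) \<longleftrightarrow> (\<forall>k. 1 \<le> k \<and> k \<le> n \<longrightarrow> P (cpow a k))"
proof -
  have "P (cwb a (Suc m)) \<longleftrightarrow> (\<forall>k. 1 \<le> k \<and> k \<le> Suc m \<longrightarrow> P (cpow a k))" for m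
  proof (induction m)
    case 0
    have "(\<forall>k. 1 \<le> k \<and> k \<le> Suc 0 \<longrightarrow> P (cpow a k)) \<longleftrightarrow> P (cpow a 1)"
      using le_antisym by fastforce
    then show ?case by simp
  next
    case (Suc m)
    have "P (cwb a (Suc (Suc m))) \<longleftrightarrow> P (cwb a (Suc m)) \<and> P (cpow a (Suc (Suc m)))"
      using conj by simp
    then show ?case using Suc.IH le_Suc_eq by auto
  qed
  moreover have "n = Suc (n - 1)" using \<open>1 \<le> n\<close> by simp
  ultimately show ?thesis by metis
qed

context saturated
begin

lemma Cder_mem: "Cder n M a \<Longrightarrow> a \<in> M"
  using Cder_cut[of n M a \<phi>] derives_insert[of a] not_derives by blast

lemma Cax_mem: "Cax n a \<Longrightarrow> a \<in> M"
  by (rule Cder_mem, rule Cder.ax)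

lemma mp_mem: "a \<in> M \<Longrightarrow> Imp a b \<in> M \<Longrightarrow> b \<in> M"
  by (rule Cder_mem, rule Cder.mp[OF Cder.prem Cder.prem])

lemma Conj_mem_iff: "Conj a b \<in> M \<longleftrightarrow> a \<in> M \<and> b \<in> M"
  using mp_mem Cax_mem[OF Cax.A3[of n a b]] Cax_mem[OF Cax.A4[of n a b]] Cax_mem[OF Cax.A5[of n a b]]
  by blast

lemma Disj_mem_iff: "Disj a b \<in> M \<longleftrightarrow> a \<in> M \<or> b \<in> M"
proof
  assume "Disj a b \<in> M"
  show "a \<in> M \<or> b \<in> M"
  proof (rule ccontr)
    assume "\<not> (a \<in> M \<or> b \<in> M)"
    then have "Imp a \<phi> \<in> M" "Imp b \<phi> \<in> M"
      using derives_insert Cder_deduction Cder_mem by blast+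
    then have "\<phi> \<in> M"
      using \<open>Disj a b \<in> M\<close> mp_mem Cax_mem[OF Cax.A8[of n a \<phi> b]] by blast
    then show False using not_derives Cder.prem by blast
  qed
next
  assume "a \<in> M \<or> b \<in> M"
  then show "Disj a b \<in> M"
    using mp_mem Cax_mem[OF Cax.A6[of n a b]] Cax_mem[OF Cax.A7[of n b a]] by blast
qed

lemma mem_or_Neg_mem: "a \<in> M \<or> Neg a \<in> M"
  using Cax_mem[OF Cax.A9[of n a]] by (simp add: Disj_mem_iff)

lemma Neg_Neg_mem: "Neg (Neg a) \<in> M \<Longrightarrow> a \<in> M"
  using mp_mem Cax_mem[OF Cax.A10[of n a]] by blast

lemma not_cwb_if_contradictory:
  assumes "a \<in> M" "Neg a \<in> M"
  shows "cwb a n \<notin> M"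
proof
  assume "cwb a n \<in> M"
  from mp_mem[OF this Cax_mem[OF Cax.A11[of n a \<phi>]]] have "\<phi> \<in> M"
    using assms mp_mem by blast
  then show False using not_derives by (blast intro: Cder.prem)
qed

lemma cpow_mem_if_consistent:
  assumes "\<not> (a \<in> M \<and> Neg a \<in> M)" and "1 \<le> k"
  shows "cpow a k \<in> M \<and> Neg (cpow a k) \<notin> M"
  using assms(2)
proof (induction k rule: dec_induct)
  case base
  have "Conj a (Neg a) \<notin> M" using assms(1) Conj_mem_iff by blast
  then show ?case using mem_or_Neg_mem Neg_Neg_mem by auto
next
  case (step k)
  have "Conj (cpow a k) (Neg (cpow a k)) \<notin> M" using step.IH Conj_mem_iff by blast
  then show ?case using mem_or_Neg_mem Neg_Neg_mem by auto
qed

lemma cpow_mem_after_nonmem: "cpow a j \<notin> M \<Longrightarrow> j < k \<Longrightarrow> cpow a k \<in> M"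
  using cpow_mem_if_consistent[of "cpow a j" "k - j"] by (simp add: cpow_cpow)

lemma cpow_nonmem_unique: "cpow a k \<notin> M \<Longrightarrow> cpow a j \<in> M \<longleftrightarrow> j \<noteq> k"
  using cpow_mem_after_nonmem[of a j k] cpow_mem_after_nonmem[of a k j] by (cases j k rule: linorder_cases) auto

lemma cwb_mem_if_consistent: "\<not> (a \<in> M \<and> Neg a \<in> M) \<Longrightarrow> 1 \<le> n \<Longrightarrow> cwb a n \<in> M"
  using cwb_iff_cpow[of "\<lambda>x. x \<in> M"] Conj_mem_iff cpow_mem_if_consistent by blast

lemma contradictory_has_nonmem_cpow:
  assumes "a \<in> M" "Neg a \<in> M" "1 \<le> n"
  obtains k where "1 \<le> k" "k \<le> n" "cpow a k \<notin> M"
  using not_cwb_if_contradictory[OF assms(1,2)] cwb_iff_cpow[of "\<lambda>x. x \<in> M"] Conj_mem_iff assms(3)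
  by blast

lemma Imp_mem_iff: "1 \<le> n \<Longrightarrow> Imp a b \<in> M \<longleftrightarrow> a \<notin> M \<or> b \<in> M"
proof
  assume "Imp a b \<in> M"
  then show "a \<notin> M \<or> b \<in> M" using mp_mem by blast
next
  assume "1 \<le> n" and "a \<notin> M \<or> b \<in> M"
  show "Imp a b \<in> M"
  proof (cases "b \<in> M")
    case True
    then show ?thesis using mp_mem Cax_mem[OF Cax.A1[of n b a]] by blast
  next
    case False
    then have "a \<notin> M" "Neg a \<in> M"
      using \<open>a \<notin> M \<or> b \<in> M\<close> mem_or_Neg_mem by auto
    then have "Imp a (Imp (Neg a) b) \<in> M"
      using cwb_mem_if_consistent[OF _ \<open>1 \<le> n\<close>] mp_mem Cax_mem[OF Cax.A11[of n a b]] by blast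
    then have "Cder n (insert a M) b"
      using \<open>Neg a \<in> M\<close> by (meson Cder.mp Cder.prem insertCI insertI1)
    then show ?thesis using Cder_deduction Cder_mem by blast
  qed
qed

lemma cwb_mem_compound:
  assumes "cwb a n \<in> M" "cwb b n \<in> M"
  shows "cwb (Conj a b) n \<in> M \<and> cwb (Disj a b) n \<in> M \<and> cwb (Imp a b) n \<in> M"
proof -
  have "Conj (cwb a n) (cwb b n) \<in> M" using assms Conj_mem_iff by blast
  from mp_mem[OF this Cax_mem[OF Cax.A12[of n a b]]] show ?thesis by (simp add: Conj_mem_iff)
qed

end

lemma Bn_iff:
  "z \<in> Bn n \<longleftrightarrow> length z = Suc n \<and> (\<forall>j m. j < m \<and> m \<le> n \<and> \<not> z ! j \<longrightarrow> z ! m)"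
proof -
  have "(\<forall>k. 1 \<le> k \<and> k \<le> n \<longrightarrow> (\<forall>i<k. z ! i) \<or> z ! k) \<longleftrightarrow>
        (\<forall>j m. j < m \<and> m \<le> n \<and> \<not> z ! j \<longrightarrow> z ! m)"
  proof (intro iffI allI impI)
    fix j m
    assume H: "\<forall>k. 1 \<le> k \<and> k \<le> n \<longrightarrow> (\<forall>i<k. z ! i) \<or> z ! k"
      and jm: "j < m \<and> m \<le> n \<and> \<not> z ! j"
    then have "(\<forall>i<m. z ! i) \<or> z ! m" by simp
    then show "z ! m" using jm by blast
  next
    fix k
    assume "\<forall>j m. j < m \<and> m \<le> n \<and> \<not> z ! j \<longrightarrow> z ! m" and "1 \<le> k \<and> k \<le> n"
    then show "(\<forall>i<k. z ! i) \<or> z ! k" by blast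
  qed
  then show ?thesis by (simp add: Bn_def)
qed

lemma Bn_true_after_false: "z \<in> Bn n \<Longrightarrow> j < m \<Longrightarrow> m \<le> n \<Longrightarrow> \<not> z ! j \<Longrightarrow> z ! m"
  by (simp add: Bn_iff)

lemma Tn_nth: "1 \<le> n \<Longrightarrow> j \<le> n \<Longrightarrow> Tn n ! j \<longleftrightarrow> j \<noteq> 1"
  by (cases j; cases "j - 1") (auto simp: Tn_def nth_Cons')

lemma Fn_nth: "j \<le> n \<Longrightarrow> Fn n ! j \<longleftrightarrow> j \<noteq> 0"
  by (cases j) (auto simp: Fn_def)

lemma tn_nth: "j \<le> n \<Longrightarrow> tn n i ! j \<longleftrightarrow> i = n - 1 \<or> j \<noteq> Suc (Suc i)"
  by (auto simp del: replicate_Suc simp add: tn_def nth_list_update)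

lemma Bn_eqI:
  assumes "z \<in> Bn n" and "length w = Suc n" and "\<And>j. j \<le> n \<Longrightarrow> z ! j \<longleftrightarrow> w ! j"
  shows "z = w"
  using assms by (intro nth_equalityI) (auto simp: Bn_iff)

lemma Bn_eq_Tn:
  assumes "1 \<le> n" and z: "z \<in> Bn n" "z ! 0" "\<not> z ! 1"
  shows "z = Tn n"
proof (rule Bn_eqI[OF z(1)])
  show "length (Tn n) = Suc n" using assms(1) by (simp add: Tn_def)
  fix j assume "j \<le> n"
  consider "j = 0" | "j = 1" | "1 < j" by linarith
  then show "z ! j \<longleftrightarrow> Tn n ! j"
    using assms \<open>j \<le> n\<close> Bn_true_after_false[OF z(1), of 1 j] by cases (auto simp: Tn_nth)
qed

lemma Bn_eq_Fn:
  assumes z: "z \<in> Bn n" "\<not> z ! 0"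
  shows "z = Fn n"
proof (rule Bn_eqI[OF z(1)])
  show "length (Fn n) = Suc n" by (simp add: Fn_def)
  fix j assume "j \<le> n"
  then show "z ! j \<longleftrightarrow> Fn n ! j"
    using z Bn_true_after_false[OF z(1), of 0 j] by (cases "j = 0") (auto simp: Fn_nth)
qed

lemma Bn_eq_tn:
  assumes z: "z \<in> Bn n" "z ! 0" "z ! 1"
  obtains i where "i \<le> n - 1" "z = tn n i"
proof (cases "\<forall>j\<le>n. z ! j")
  case True
  have "z = tn n (n - 1)"
  proof (rule Bn_eqI[OF z(1)])
    show "length (tn n (n - 1)) = Suc n" by (simp add: tn_def)
    fix j assume "j \<le> n"
    then show "z ! j \<longleftrightarrow> tn n (n - 1) ! j" using True by (simp add: tn_nth)
  qed
  then show ?thesis using that by blast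
next
  case False
  then obtain j where j: "j \<le> n" "\<not> z ! j" by blast
  have "j \<noteq> 0" "j \<noteq> 1" using z(2,3) j(2) by metis+
  then have "2 \<le> j" by linarith
  have z_nth: "z ! m \<longleftrightarrow> m \<noteq> j" if "m \<le> n" for m
  proof (cases m j rule: linorder_cases)
    case less
    then show ?thesis using Bn_true_after_false[OF z(1) less] j by auto
  next
    case greater
    then show ?thesis using Bn_true_after_false[OF z(1) greater that j(2)] by simp
  qed (use j in simp)
  have "z = tn n (j - 2)"
  proof (rule Bn_eqI[OF z(1)])
    show "length (tn n (j - 2)) = Suc n" by (simp add: tn_def)
    fix m assume "m \<le> n"
    moreover have "j - 2 \<noteq> n - 1" "Suc (Suc (j - 2)) = j" using j(1) \<open>2 \<le> j\<close> by linarith+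
    ultimately show "z ! m \<longleftrightarrow> tn n (j - 2) ! m" using z_nth by (simp add: tn_nth)
  qed
  moreover have "j - 2 \<le> n - 1" using j(1) by linarith
  ultimately show ?thesis using that by blast
qed

lemma mem_Boo_iff:
  assumes "1 \<le> n" "z \<in> Bn n"
  shows "z \<in> Boo n \<longleftrightarrow> \<not> (z ! 0 \<and> z ! 1)"
  using assms Bn_eq_Tn[OF assms] Bn_eq_Fn[OF assms(2)] Tn_nth[OF assms(1), of 1] Fn_nth[of 0 n]
  by (auto simp: Boo_def)

lemma Bn_nth0_or_nth1: "z \<in> Bn n \<Longrightarrow> 1 \<le> n \<Longrightarrow> z ! 0 \<or> z ! 1"
  using Bn_true_after_false[of z n 0 1] by auto

lemma binM_nth0: "u \<in> binM n f z w \<Longrightarrow> u ! 0 \<longleftrightarrow> f (z ! 0) (w ! 0)"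
  by (auto simp: binM_def split: if_splits)

lemma binM_Boo: "z \<in> Boo n \<Longrightarrow> w \<in> Boo n \<Longrightarrow> u \<in> binM n f z w \<Longrightarrow> u \<in> Boo n"
  by (auto simp: binM_def)

locale rn_valuation =
  fixes n :: nat and v :: "fm \<Rightarrow> bool list"
  assumes one_le_n: "1 \<le> n" and v_FC: "v \<in> FC n"
begin

lemma valuation_v: "valuation n v"
  using v_FC by (simp add: FC_def)

lemma v_Bn: "v a \<in> Bn n"
  using valuation_v by (simp add: valuation_def)

lemma v_Neg: "v (Neg a) \<in> negM n (v a)"
  and v_Conj: "v (Conj a b) \<in> binM n (\<and>) (v a) (v b)"
  and v_Disj: "v (Disj a b) \<in> binM n (\<or>) (v a) (v b)"
  and v_Imp: "v (Imp a b) \<in> binM n (\<longrightarrow>) (v a) (v b)"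
  using valuation_v by (simp_all add: valuation_def)

lemma v_Neg_nth0: "v (Neg a) ! 0 \<longleftrightarrow> v a ! 1"
  and v_Neg_nth1: "v (Neg a) ! 1 \<Longrightarrow> v a ! 0"
  using v_Neg by (simp_all add: negM_def)

lemma v_Conj_nth0: "v (Conj a b) ! 0 \<longleftrightarrow> v a ! 0 \<and> v b ! 0"
  and v_Disj_nth0: "v (Disj a b) ! 0 \<longleftrightarrow> v a ! 0 \<or> v b ! 0"
  and v_Imp_nth0: "v (Imp a b) ! 0 \<longleftrightarrow> (v a ! 0 \<longrightarrow> v b ! 0)"
  using binM_nth0[OF v_Conj] binM_nth0[OF v_Disj] binM_nth0[OF v_Imp] .

lemma FC_tn0: "v a = tn n 0 \<Longrightarrow> v (Conj a (Neg a)) = Tn n"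
  using v_FC unfolding FC_def by blast

lemma FC_tn_Suc:
  assumes "Suc i \<le> n - 1" and "v a = tn n (Suc i)"
  shows "v (cpow a 1) = tn n i"
proof -
  have "\<forall>a k. 1 \<le> k \<and> k \<le> n - 1 \<and> v a = tn n k \<longrightarrow> v (cpow a 1) = tn n (k - 1)"
    using v_FC unfolding FC_def by blast
  from this[rule_format, of "Suc i" a] show ?thesis using assms by simp
qed

lemma v_Dn_iff: "v a \<in> Dn n \<longleftrightarrow> v a ! 0"
  using v_Bn by (simp add: Dn_def)

lemma Boo_iff_nth1: "v a \<in> Boo n \<longleftrightarrow> (v a ! 1 \<longleftrightarrow> \<not> v a ! 0)"
  using mem_Boo_iff[OF one_le_n v_Bn] Bn_nth0_or_nth1[OF v_Bn one_le_n] by auto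

lemma Neg_Boo: "v a \<in> Boo n \<Longrightarrow> v (Neg a) \<in> Boo n \<and> (v (Neg a) ! 0 \<longleftrightarrow> \<not> v a ! 0)"
  using Boo_iff_nth1[of a] Boo_iff_nth1[of "Neg a"] Bn_nth0_or_nth1[OF v_Bn one_le_n, of "Neg a"]
    v_Neg_nth0[of a] v_Neg_nth1[of a]
  by auto

lemma cpow1_Boo_eq_Tn:
  assumes "v a \<in> Boo n"
  shows "v (cpow a 1) = Tn n"
proof -
  have "v (Conj a (Neg a)) \<in> Boo n" "\<not> v (Conj a (Neg a)) ! 0"
    using binM_Boo[OF assms _ v_Conj] Neg_Boo[OF assms] v_Conj_nth0 by auto
  then have "v (cpow a 1) \<in> Boo n" "v (cpow a 1) ! 0"
    using Neg_Boo by auto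
  then show ?thesis using Fn_nth[of 0 n] by (auto simp: Boo_def)
qed

lemma cpow_Boo_eq_Tn:
  assumes "v a \<in> Boo n" and "1 \<le> k"
  shows "v (cpow a k) = Tn n"
  using assms(2)
proof (induction k rule: dec_induct)
  case base
  then show ?case using cpow1_Boo_eq_Tn[OF assms(1)] by simp
next
  case (step k)
  then have "v (cpow a k) \<in> Boo n" by (simp add: Boo_def)
  then show ?case using cpow1_Boo_eq_Tn by simp
qed

lemma cpow_tn_undesignated: "i \<le> n - 1 \<Longrightarrow> v a = tn n i \<Longrightarrow> \<not> v (cpow a (Suc i)) ! 0"
proof (induction i arbitrary: a)
  case 0
  then have "v (Conj a (Neg a)) = Tn n" by (simp add: FC_tn0)
  then show ?case using v_Neg_nth0 Tn_nth[OF one_le_n, of 1] one_le_n by simp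
next
  case (Suc i)
  have "v (cpow a 1) = tn n i" using FC_tn_Suc[OF Suc.prems] .
  then have "\<not> v (cpow (cpow a 1) (Suc i)) ! 0" using Suc by simp
  then show ?case using cpow_cpow[of a 1 "Suc i"] by (simp del: cpow.simps)
qed

lemma cwb_designated_iff_Boo: "v (cwb a n) ! 0 \<longleftrightarrow> v a \<in> Boo n"
proof -
  have cwb: "v (cwb a n) ! 0 \<longleftrightarrow> (\<forall>k. 1 \<le> k \<and> k \<le> n \<longrightarrow> v (cpow a k) ! 0)"
    using cwb_iff_cpow[of "\<lambda>x. v x ! 0", OF v_Conj_nth0 one_le_n] .
  show ?thesis
  proof
    assume "v a \<in> Boo n"
    then show "v (cwb a n) ! 0" using cwb cpow_Boo_eq_Tn Tn_nth[OF one_le_n, of 0] by simp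
  next
    assume "v (cwb a n) ! 0"
    show "v a \<in> Boo n"
    proof (rule ccontr)
      assume "v a \<notin> Boo n"
      then obtain i where i: "i \<le> n - 1" "v a = tn n i"
        using Bn_eq_tn[OF v_Bn] mem_Boo_iff[OF one_le_n v_Bn] by blast
      then have "\<not> v (cpow a (Suc i)) ! 0" by (rule cpow_tn_undesignated)
      moreover have "1 \<le> Suc i \<and> Suc i \<le> n" using i(1) one_le_n by simp
      ultimately show False using cwb \<open>v (cwb a n) ! 0\<close> by blast
    qed
  qed
qed

lemma Cax_designated: "Cax n x \<Longrightarrow> v x ! 0"
proof (induction rule: Cax.induct)
  case (A9 a)
  then show ?case using v_Disj_nth0 v_Neg_nth0 Bn_nth0_or_nth1[OF v_Bn one_le_n] by simp
next
  case (A10 a)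
  then show ?case using v_Imp_nth0 v_Neg_nth0 v_Neg_nth1 by simp
next
  case (A11 a b)
  then show ?case
    using v_Imp_nth0 v_Neg_nth0 cwb_designated_iff_Boo mem_Boo_iff[OF one_le_n v_Bn] by simp
next
  case (A12 a b)
  have "v (Conj a b) \<in> Boo n \<and> v (Disj a b) \<in> Boo n \<and> v (Imp a b) \<in> Boo n"
    if "v a \<in> Boo n" "v b \<in> Boo n"
    using binM_Boo[OF that] v_Conj v_Disj v_Imp by blast
  then show ?case using v_Imp_nth0 v_Conj_nth0 cwb_designated_iff_Boo by simp
qed (simp_all add: v_Imp_nth0 v_Conj_nth0 v_Disj_nth0)

end

lemma Cder_imp_RNcons:
  assumes "1 \<le> n" and "Cder n \<Gamma> \<phi>"
  shows "RNcons n \<Gamma> \<phi>"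
  unfolding RNcons_def
proof (intro ballI impI)
  fix v assume "v \<in> FC n" and \<Gamma>: "\<forall>g\<in>\<Gamma>. v g \<in> Dn n"
  then interpret rn_valuation n v using assms(1) by unfold_locales
  from assms(2) show "v \<phi> \<in> Dn n"
  proof (induction rule: Cder.induct)
    case (prem a)
    then show ?case using \<Gamma> by blast
  next
    case (ax a)
    then show ?case using Cax_designated v_Dn_iff by blast
  next
    case (mp a b)
    then show ?case using v_Imp_nth0 v_Dn_iff by blast
  qed
qed

fun canon_coord :: "fm set \<Rightarrow> fm \<Rightarrow> nat \<Rightarrow> bool" where
  "canon_coord M a 0 \<longleftrightarrow> a \<in> M"
| "canon_coord M a (Suc 0) \<longleftrightarrow> Neg a \<in> M"
| "canon_coord M a (Suc (Suc j)) \<longleftrightarrow> cpow a (Suc j) \<in> M"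

definition canon_val :: "nat \<Rightarrow> fm set \<Rightarrow> fm \<Rightarrow> bool list" where
  "canon_val n M a = map (canon_coord M a) [0..<Suc n]"

lemma length_canon_val: "length (canon_val n M a) = Suc n"
  by (simp add: canon_val_def)

lemma canon_val_nth: "j \<le> n \<Longrightarrow> canon_val n M a ! j \<longleftrightarrow> canon_coord M a j"
  by (simp add: canon_val_def nth_map_upt del: upt_Suc)

lemma (in saturated) canon_coord_after_false:
  assumes "\<not> canon_coord M a j" and "j < m"
  shows "canon_coord M a m"
proof (cases m)
  case 0
  then show ?thesis using assms(2) by simp
next
  case (Suc m')
  show ?thesis
  proof (cases m')
    case 0
    then show ?thesis using Suc assms mem_or_Neg_mem[of a] by simp
  next
    case (Suc k)
    consider "j = 0" | "j = 1" | j' where "j = Suc (Suc j')"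
      by (metis One_nat_def not0_implies_Suc)
    then have "cpow a (Suc k) \<in> M"
    proof cases
      case 1
      then show ?thesis using assms(1) cpow_mem_after_nonmem[of a 0 "Suc k"] by simp
    next
      case 2
      then show ?thesis using assms(1) cpow_mem_if_consistent[of a "Suc k"] by simp
    next
      case 3
      then have "cpow a (Suc j') \<notin> M" "Suc j' < Suc k"
        using assms \<open>m = Suc m'\<close> Suc by simp_all
      then show ?thesis by (rule cpow_mem_after_nonmem)
    qed
    then show ?thesis using \<open>m = Suc m'\<close> Suc by simp
  qed
qed

locale canonical = saturated +
  assumes one_le_n: "1 \<le> n"
begin

lemma canon_nth0: "canon_val n M a ! 0 \<longleftrightarrow> a \<in> M"
  and canon_nth1: "canon_val n M a ! 1 \<longleftrightarrow> Neg a \<in> M"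
  using canon_val_nth[of 0 n M a] canon_val_nth[of 1 n M a] one_le_n by simp_all

lemma canon_nth_Suc_Suc:
  "Suc (Suc j) \<le> n \<Longrightarrow> canon_val n M a ! Suc (Suc j) \<longleftrightarrow> cpow a (Suc j) \<in> M"
  by (simp add: canon_val_nth)

lemma canon_val_Bn: "canon_val n M a \<in> Bn n"
  using canon_coord_after_false by (auto simp: Bn_iff length_canon_val canon_val_nth)

lemma canon_val_Boo_iff: "canon_val n M a \<in> Boo n \<longleftrightarrow> \<not> (a \<in> M \<and> Neg a \<in> M)"
  using mem_Boo_iff[OF one_le_n canon_val_Bn] canon_nth0 canon_nth1 by simp

lemma canon_val_binM:
  assumes "c \<in> {Conj a b, Disj a b, Imp a b}" and "c \<in> M \<longleftrightarrow> f (a \<in> M) (b \<in> M)"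
  shows "canon_val n M c \<in> binM n f (canon_val n M a) (canon_val n M b)"
proof (cases "canon_val n M a \<in> Boo n \<and> canon_val n M b \<in> Boo n")
  case True
  then have "cwb a n \<in> M" "cwb b n \<in> M"
    using canon_val_Boo_iff cwb_mem_if_consistent one_le_n by blast+
  then have "cwb c n \<in> M" using cwb_mem_compound assms(1) by blast
  then have "canon_val n M c \<in> Boo n"
    using canon_val_Boo_iff not_cwb_if_contradictory by blast
  then show ?thesis using True assms(2) by (simp add: binM_def canon_nth0)
next
  case False
  then show ?thesis using assms(2) canon_val_Bn by (auto simp: binM_def canon_nth0)
qed

lemma canon_val_valuation: "valuation n (canon_val n M)"
  unfolding valuation_def
proof (intro conjI allI)
  fix a b
  show "canon_val n M a \<in> Bn n" by (rule canon_val_Bn)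
  show "canon_val n M (Neg a) \<in> negM n (canon_val n M a)"
    using canon_val_Bn Neg_Neg_mem canon_nth1[of a] canon_nth1[of "Neg a"]
    by (auto simp: negM_def canon_nth0)
  show "canon_val n M (Conj a b) \<in> binM n (\<and>) (canon_val n M a) (canon_val n M b)"
    by (rule canon_val_binM) (auto simp: Conj_mem_iff)
  show "canon_val n M (Disj a b) \<in> binM n (\<or>) (canon_val n M a) (canon_val n M b)"
    by (rule canon_val_binM) (auto simp: Disj_mem_iff)
  show "canon_val n M (Imp a b) \<in> binM n (\<longrightarrow>) (canon_val n M a) (canon_val n M b)"
    by (rule canon_val_binM) (auto simp: Imp_mem_iff[OF one_le_n])
qed

lemma canon_val_eq_tn_iff:
  assumes "i \<le> n - 1"
  shows "canon_val n M a = tn n i \<longleftrightarrow> a \<in> M \<and> Neg a \<in> M \<and> cpow a (Suc i) \<notin> M"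
proof
  assume eq: "canon_val n M a = tn n i"
  have canon_nth: "canon_val n M a ! j \<longleftrightarrow> i = n - 1 \<or> j \<noteq> Suc (Suc i)" if "j \<le> n" for j
    using eq tn_nth that by simp
  have a: "a \<in> M" "Neg a \<in> M"
    using canon_nth[of 0] canon_nth[of 1] canon_nth0 canon_nth1 one_le_n by auto
  moreover have "cpow a (Suc i) \<notin> M"
  proof (cases "i = n - 1")
    case True
    obtain k where k: "1 \<le> k" "k \<le> n" "cpow a k \<notin> M"
      using contradictory_has_nonmem_cpow[OF a one_le_n] .
    have "k = n"
    proof (rule ccontr)
      assume "k \<noteq> n"
      then obtain k' where "k = Suc k'" "Suc (Suc k') \<le> n" using k by (cases k) auto
      then show False using canon_nth[of "Suc (Suc k')"] canon_nth_Suc_Suc True k(3) by simp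
    qed
    then show ?thesis using True k(3) one_le_n by simp
  next
    case False
    then have "Suc (Suc i) \<le> n" using assms by linarith
    then show ?thesis using canon_nth[of "Suc (Suc i)"] canon_nth_Suc_Suc False by simp
  qed
  ultimately show "a \<in> M \<and> Neg a \<in> M \<and> cpow a (Suc i) \<notin> M" by blast
next
  assume a: "a \<in> M \<and> Neg a \<in> M \<and> cpow a (Suc i) \<notin> M"
  show "canon_val n M a = tn n i"
  proof (rule Bn_eqI[OF canon_val_Bn])
    show "length (tn n i) = Suc n" by (simp add: tn_def)
    fix j assume "j \<le> n"
    consider "j = 0" | "j = 1" | j' where "j = Suc (Suc j')"
      by (metis One_nat_def not0_implies_Suc)
    then show "canon_val n M a ! j \<longleftrightarrow> tn n i ! j"
    proof cases
      case 3
      then have "cpow a (Suc j') \<in> M \<longleftrightarrow> j' \<noteq> i"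
        using cpow_nonmem_unique[of a "Suc i" "Suc j'"] a by simp
      moreover have "i = n - 1 \<longrightarrow> j' \<noteq> i" using 3 \<open>j \<le> n\<close> by linarith
      ultimately show ?thesis using 3 \<open>j \<le> n\<close> canon_nth_Suc_Suc[of j' a] tn_nth[of j n i] by auto
    qed (use a \<open>j \<le> n\<close> canon_nth0 canon_nth1 tn_nth in auto)
  qed
qed

lemma canon_val_FC_tn0:
  assumes "canon_val n M a = tn n 0"
  shows "canon_val n M (Conj a (Neg a)) = Tn n"
proof -
  have "a \<in> M" "Neg a \<in> M" "cpow a 1 \<notin> M"
    using assms canon_val_eq_tn_iff[of 0] by auto
  then have "Conj a (Neg a) \<in> M" "Neg (Conj a (Neg a)) \<notin> M"
    using Conj_mem_iff by auto
  then show ?thesis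
    using Bn_eq_Tn[OF one_le_n canon_val_Bn] canon_nth0 canon_nth1 by simp
qed

lemma canon_val_FC_tn:
  assumes k: "1 \<le> k" "k \<le> n - 1" and "canon_val n M a = tn n k"
  shows "canon_val n M (Conj a (Neg a)) \<in> In n \<and> canon_val n M (cpow a 1) = tn n (k - 1)"
proof -
  have a: "a \<in> M" "Neg a \<in> M" "cpow a (Suc k) \<notin> M"
    using assms canon_val_eq_tn_iff by auto
  have cpow_Suc_k: "cpow (cpow a 1) (Suc (k - 1)) = cpow a (Suc k)"
    using k(1) cpow_cpow[of a 1 k] by simp
  have a1: "cpow a 1 \<in> M"
    using cpow_nonmem_unique[OF a(3), of 1] k(1) by simp
  have "Neg (cpow a 1) \<in> M"
  proof (rule ccontr)
    assume "Neg (cpow a 1) \<notin> M"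
    then have "cpow (cpow a 1) (Suc (k - 1)) \<in> M"
      using cpow_mem_if_consistent[of "cpow a 1" "Suc (k - 1)"] by (simp del: cpow.simps)
    then show False using a(3) cpow_Suc_k by simp
  qed
  moreover have "k - 1 \<le> n - 1" using k(2) by linarith
  ultimately have "canon_val n M (cpow a 1) = tn n (k - 1)"
    using canon_val_eq_tn_iff[of "k - 1" "cpow a 1"] a1 a(3) cpow_Suc_k by (simp del: cpow.simps)
  moreover have "canon_val n M (Conj a (Neg a)) \<notin> Boo n"
    using canon_val_Boo_iff a(1,2) a1 Conj_mem_iff by simp
  ultimately show ?thesis using canon_val_Bn by (simp add: In_def)
qed

lemma canon_val_FC: "canon_val n M \<in> FC n"
  using canon_val_valuation canon_val_FC_tn0 canon_val_FC_tn unfolding FC_def by blast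

end

theorem RNcons_imp_Cder:
  assumes "1 \<le> n" and "RNcons n \<Gamma> \<phi>"
  shows "Cder n \<Gamma> \<phi>"
proof (rule ccontr)
  assume "\<not> Cder n \<Gamma> \<phi>"
  then obtain M where "\<Gamma> \<subseteq> M" and "saturated n M \<phi>"
    using saturated_extension by blast
  then interpret canonical n M \<phi>
    using assms(1) by (simp add: canonical_def canonical_axioms_def)
  have "\<forall>g\<in>\<Gamma>. canon_val n M g \<in> Dn n"
    using \<open>\<Gamma> \<subseteq> M\<close> canon_val_Bn canon_nth0 by (auto simp: Dn_def)
  then have "canon_val n M \<phi> \<in> Dn n"
    using assms(2) canon_val_FC by (simp add: RNcons_def)
  then have "\<phi> \<in> M" by (simp add: Dn_def canon_nth0)
  then show False using not_derives Cder.prem by blast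
qed

theorem mainTheorem13:
  fixes n :: nat and \<Gamma> :: "fm set" and \<phi> :: fm
  assumes "n \<ge> 2"
  shows "Cder n \<Gamma> \<phi> \<longleftrightarrow> RNcons n \<Gamma> \<phi>"
proof -
  have "1 \<le> n" using assms by simp
  then show ?thesis using Cder_imp_RNcons RNcons_imp_Cder by blast
qed

end
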